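(* Let $n\ge 1$ and $0\le t<n$ be integers, and write $n=(n-t)q+r$ where $q,r$ are the unique integers with $0\le r<n-t$. Then \[ S(n,t,2)=q^{\,n-t-r}(q+1)^r. \]
   Context: A CNF formula over variables $x_1,\dots,x_n$ is a conjunction of clauses (disjunctions of literals); a $k$-CNF has all clauses of width at most $k$. $\mathrm{sat}_t(F)$ denotes the set of satisfying assignments of $F$ of Hamming weight exactly $t$. $F$ is $t$-admissible if it has no satisfying assignment of Hamming weight less than $t$. $S(n,t,k)$ is the maximum of $|\mathrm{sat}_t(F)|$ over all $t$-admissible $k$-CNF formulas $F$ on $n$ variables. *)

theory Defs
  imports Main
begin

text \<open>Variables are x_0,...,x_{n-1} (indices in {0..<n}). A literal is a pair (i, b):
  (i, True) is the positive literal x_i, (i, False) the negative literal.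
  An assignment is identified with the set of variables it sets to true; its Hamming weight
  is the cardinality of that set.\<close>

type_synonym literal = "nat \<times> bool"
type_synonym clause = "literal set"
type_synonym cnf = "clause set"

definition lit_sat :: "nat set \<Rightarrow> literal \<Rightarrow> bool" where
  "lit_sat A l = (if snd l then fst l \<in> A else fst l \<notin> A)"

definition clause_sat :: "nat set \<Rightarrow> clause \<Rightarrow> bool" where
  "clause_sat A C = (\<exists>l\<in>C. lit_sat A l)"

definition cnf_sat :: "nat set \<Rightarrow> cnf \<Rightarrow> bool" where
  "cnf_sat A F = (\<forall>C\<in>F. clause_sat A C)"

definition is_kcnf :: "nat \<Rightarrow> nat \<Rightarrow> cnf \<Rightarrow> bool" where
  "is_kcnf n k F = (\<forall>C\<in>F. fst ` C \<subseteq> {0..<n} \<and> finite C \<and> card C \<le> k)"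

definition sat_t :: "nat \<Rightarrow> nat \<Rightarrow> cnf \<Rightarrow> nat set set" where
  "sat_t n t F = {A. A \<subseteq> {0..<n} \<and> card A = t \<and> cnf_sat A F}"

definition admissible :: "nat \<Rightarrow> nat \<Rightarrow> cnf \<Rightarrow> bool" where
  "admissible n t F = (\<forall>A. A \<subseteq> {0..<n} \<and> card A < t \<longrightarrow> \<not> cnf_sat A F)"

definition S :: "nat \<Rightarrow> nat \<Rightarrow> nat \<Rightarrow> nat" where
  "S n t k = Max {card (sat_t n t F) | F. is_kcnf n k F \<and> admissible n t F}"

end

theory Submission
  imports Defs "HOL-Library.FuncSet"
begin

text \<open>Upper bound: the solutions of a 2-CNF are closed under bitwise majority, which gives a
  Helly property: variables that can pairwise be set to false together can all be set to false
  at once. So in the graph joining two variables that are false in a common solution,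
  admissibility bounds every clique by \<open>m = n - t\<close>, while the zero sets of the weight-\<open>t\<close>
  solutions are cliques of exactly that size. A Turan-type induction, deleting a vertex with at
  least \<open>n/m\<close> non-neighbours, bounds the number of \<open>m\<close>-cliques of such a graph by
  \<open>q^(m - r) (q + 1)^r\<close>. Lower bound: allowing at most one false variable in each residue class
  modulo \<open>m\<close> attains this product.\<close>

section \<open>Balanced products\<close>

text \<open>The product of the part sizes of a partition of \<open>n\<close> into \<open>m\<close> nearly equal parts.\<close>
definition balanced_prod :: "nat \<Rightarrow> nat \<Rightarrow> nat" where
  "balanced_prod n m = (n div m) ^ (m - n mod m) * (n div m + 1) ^ (n mod m)"

lemma balanced_prod_eq:
  assumes "r < m"
  shows "balanced_prod (q * m + r) m = q ^ (m - r) * (q + 1) ^ r"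
  using assms by (simp add: balanced_prod_def)

lemma balanced_prod_le_Suc:
  assumes "0 < m"
  shows "balanced_prod n m \<le> balanced_prod (Suc n) m"
proof -
  define q r where "q = n div m" and "r = n mod m"
  have n: "n = q * m + r" and "r < m"
    using assms by (simp_all add: q_def r_def)
  show ?thesis
  proof (cases "Suc r < m")
    case True
    have "m - r = Suc (m - Suc r)"
      using True by simp
    then have "balanced_prod n m = q ^ (m - Suc r) * (q * (q + 1) ^ r)"
      using balanced_prod_eq[OF \<open>r < m\<close>, of q] n by simp
    also have "\<dots> \<le> q ^ (m - Suc r) * ((q + 1) * (q + 1) ^ r)"
      by (intro mult_le_mono2) simp
    also have "\<dots> = balanced_prod (Suc n) m"
      using balanced_prod_eq[OF True, of q] n by simp
    finally show ?thesis .
  next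
    case False
    then have m: "m = Suc r"
      using \<open>r < m\<close> by simp
    have "balanced_prod n m = q * (q + 1) ^ r"
      using balanced_prod_eq[OF \<open>r < m\<close>, of q] n m by simp
    also have "\<dots> \<le> (q + 1) * (q + 1) ^ r"
      by simp
    also have "\<dots> = balanced_prod (Suc n) m"
      using balanced_prod_eq[of 0 m "q + 1"] n m by (simp add: algebra_simps)
    finally show ?thesis .
  qed
qed

lemma balanced_prod_mono: "0 < m \<Longrightarrow> n \<le> n' \<Longrightarrow> balanced_prod n m \<le> balanced_prod n' m"
  by (rule lift_Suc_mono_le[of "\<lambda>n. balanced_prod n m"]) (simp_all add: balanced_prod_le_Suc)

text \<open>The recurrence behind the clique count: a vertex with at least \<open>n/m\<close> non-neighbours
  and \<open>d\<close> neighbours is deleted.\<close>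
lemma balanced_prod_delete_vertex:
  assumes "2 \<le> m" and "1 \<le> n" and "d \<le> n" and "n \<le> m * (n - d)"
  shows "balanced_prod (n - 1) m + balanced_prod d (m - 1) \<le> balanced_prod n m"
proof -
  define q r where "q = n div m" and "r = n mod m"
  have n: "n = q * m + r" and "r < m"
    using assms(1) by (simp_all add: q_def r_def)
  have mono: "balanced_prod d (m - 1) \<le> balanced_prod d' (m - 1)" if "d \<le> d'" for d'
    using balanced_prod_mono[OF _ that] assms(1) by simp
  have qm: "q * m = q * (m - 1) + q"
    using assms(1) by (cases m) auto
  show ?thesis
  proof (cases "r = 0")
    case False
    have "m * q < m * (n - d)"
      using assms(4) n False by (simp add: algebra_simps)
    then have "q < n - d"
      by simp
    then have "d \<le> q * (m - 1) + (r - 1)"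
      using n qm False by linarith
    then have "balanced_prod d (m - 1) \<le> q ^ (m - r) * (q + 1) ^ (r - 1)"
      using mono balanced_prod_eq[of "r - 1" "m - 1" q] \<open>r < m\<close> False by fastforce
    moreover have "balanced_prod (n - 1) m = q * q ^ (m - r) * (q + 1) ^ (r - 1)"
      using balanced_prod_eq[of "r - 1" m q] n \<open>r < m\<close> False by (simp add: Suc_diff_le)
    moreover have "balanced_prod n m = q ^ (m - r) * (q + 1) ^ Suc (r - 1)"
      using balanced_prod_eq[OF \<open>r < m\<close>] n False by simp
    ultimately show ?thesis
      by (simp add: algebra_simps)
  next
    case True
    have "m * q \<le> m * (n - d)"
      using assms(4) n True by (simp add: algebra_simps)
    then have "q \<le> n - d"
      using assms(1) by simp
    then have "d \<le> q * (m - 1)"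
      using n qm True assms(3) by linarith
    then have "balanced_prod d (m - 1) \<le> q ^ (m - 1)"
      using mono balanced_prod_eq[of 0 "m - 1" q] assms(1) by fastforce
    moreover obtain p where q: "q = Suc p"
      using n True assms(2) by (cases q) auto
    moreover have "balanced_prod (n - 1) m = p * q ^ (m - 1)"
      using balanced_prod_eq[of "m - 1" m p] n True q assms(1) by (simp add: algebra_simps)
    moreover have "balanced_prod n m = q * q ^ (m - 1)"
      using balanced_prod_eq[OF \<open>r < m\<close>] n True assms(1) by (simp add: power_eq_if)
    ultimately show ?thesis
      by simp
  qed
qed

section \<open>Counting maximum cliques\<close>

definition clique :: "'a set \<Rightarrow> ('a \<Rightarrow> 'a \<Rightarrow> bool) \<Rightarrow> 'a set \<Rightarrow> bool" where
  "clique V adj K \<longleftrightarrow> K \<subseteq> V \<and> (\<forall>x\<in>K. \<forall>y\<in>K. x \<noteq> y \<longrightarrow> adj x y)"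

abbreviation cliques :: "'a set \<Rightarrow> ('a \<Rightarrow> 'a \<Rightarrow> bool) \<Rightarrow> nat \<Rightarrow> 'a set set" where
  "cliques V adj m \<equiv> {K. clique V adj K \<and> card K = m}"

lemma finite_cliques: "finite V \<Longrightarrow> finite (cliques V adj m)"
  by (rule finite_subset[of _ "Pow V"]) (auto simp: clique_def)

lemma clique_insert_if_few_non_neighbours:
  assumes "finite V" and "clique V adj K"
    and "\<And>x y. adj x y \<Longrightarrow> adj y x" and "\<And>x. \<not> adj x x"
    and "(\<Sum>v\<in>K. card {u\<in>V. \<not> adj v u}) < card V"
  shows "\<exists>u. u \<notin> K \<and> clique V adj (insert u K)"
proof -
  define N where "N = (\<Union>v\<in>K. {u\<in>V. \<not> adj v u})"
  have "finite K"
    using assms(1,2) by (auto simp: clique_def intro: finite_subset)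
  then have "card N \<le> (\<Sum>v\<in>K. card {u\<in>V. \<not> adj v u})"
    unfolding N_def by (rule card_UN_le)
  then have "N \<noteq> V"
    using assms(5) by auto
  moreover have "N \<subseteq> V"
    unfolding N_def by auto
  ultimately obtain u where u: "u \<in> V" "u \<notin> N"
    by blast
  have "u \<notin> K"
    using u assms(4) by (auto simp: N_def)
  moreover have "clique V adj (insert u K)"
    using assms(2,3) u by (auto simp: clique_def N_def)
  ultimately show ?thesis
    by blast
qed

lemma exists_vertex_many_non_neighbours:
  assumes "finite V" and "V \<noteq> {}"
    and "\<And>x y. adj x y \<Longrightarrow> adj y x" and "\<And>x. \<not> adj x x"
    and "\<And>K. clique V adj K \<Longrightarrow> card K \<le> m"
  shows "\<exists>v\<in>V. card V \<le> m * card {u\<in>V. \<not> adj v u}"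
proof (rule ccontr)
  assume "\<not> ?thesis"
  then have few: "m * card {u\<in>V. \<not> adj v u} < card V" if "v \<in> V" for v
    using that by auto
  have "\<exists>K. clique V adj K \<and> card K = k" if "k \<le> Suc m" for k
    using that
  proof (induction k)
    case 0
    show ?case
      by (rule exI[of _ "{}"]) (simp add: clique_def)
  next
    case (Suc k)
    then obtain K where K: "clique V adj K" "card K = k"
      by auto
    have "finite K"
      using K(1) assms(1) by (auto simp: clique_def intro: finite_subset)
    have "(\<Sum>v\<in>K. card {u\<in>V. \<not> adj v u}) < card V"
    proof (cases "K = {}")
      case True
      then show ?thesis
        using assms(1,2) by (simp add: card_gt_0_iff)
    next
      case False
      have "m * (\<Sum>v\<in>K. card {u\<in>V. \<not> adj v u}) = (\<Sum>v\<in>K. m * card {u\<in>V. \<not> adj v u})"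
        by (simp add: sum_distrib_left)
      also have "\<dots> < (\<Sum>v\<in>K. card V)"
        using K(1) False few \<open>finite K\<close> by (intro sum_strict_mono) (auto simp: clique_def)
      also have "\<dots> \<le> m * card V"
        using K(2) Suc.prems by simp
      finally show ?thesis
        by simp
    qed
    then obtain u where "u \<notin> K" "clique V adj (insert u K)"
      using clique_insert_if_few_non_neighbours[OF assms(1) K(1) assms(3,4)] by blast
    then show ?case
      using K(2) \<open>finite K\<close> by (intro exI[of _ "insert u K"]) simp
  qed
  then obtain K where "clique V adj K" "card K = Suc m"
    by blast
  then show False
    using assms(5) by fastforce
qed

lemma card_cliques_1_le: "finite V \<Longrightarrow> card (cliques V adj 1) \<le> card V"
proof -
  assume "finite V"
  have "cliques V adj 1 \<subseteq> (\<lambda>v. {v}) ` V"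
    by (auto simp: clique_def card_1_singleton_iff)
  then have "card (cliques V adj 1) \<le> card ((\<lambda>v. {v}) ` V)"
    using \<open>finite V\<close> by (intro card_mono) auto
  also have "\<dots> \<le> card V"
    using \<open>finite V\<close> by (rule card_image_le)
  finally show ?thesis .
qed

lemma card_cliques_le_split:
  assumes "finite V" and "v \<in> V"
  shows "card (cliques V adj m)
    \<le> card (cliques (V - {v}) adj m) + card (cliques {u\<in>V. adj v u} adj (m - 1))"
proof -
  let ?N = "{u\<in>V. adj v u}"
  have "cliques V adj m \<subseteq> cliques (V - {v}) adj m \<union> insert v ` cliques ?N adj (m - 1)"
  proof
    fix K
    assume K: "K \<in> cliques V adj m"
    show "K \<in> cliques (V - {v}) adj m \<union> insert v ` cliques ?N adj (m - 1)"
    proof (cases "v \<in> K")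
      case True
      have "finite K"
        using K assms(1) by (auto simp: clique_def intro: finite_subset)
      then have "K - {v} \<in> cliques ?N adj (m - 1)"
        using K True by (auto simp: clique_def)
      then show ?thesis
        using True by (auto intro!: image_eqI[of _ _ "K - {v}"])
    qed (use K in \<open>auto simp: clique_def\<close>)
  qed
  then have "card (cliques V adj m)
      \<le> card (cliques (V - {v}) adj m \<union> insert v ` cliques ?N adj (m - 1))"
    using assms(1) by (intro card_mono) (auto intro!: finite_cliques)
  also have "\<dots> \<le> card (cliques (V - {v}) adj m) + card (insert v ` cliques ?N adj (m - 1))"
    by (rule card_Un_le)
  also have "\<dots> \<le> card (cliques (V - {v}) adj m) + card (cliques ?N adj (m - 1))"
    using assms(1) by (simp add: card_image_le finite_cliques)
  finally show ?thesis .
qed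

lemma card_clique_neighbourhood_le:
  assumes "finite V" and "\<And>x y. adj x y \<Longrightarrow> adj y x" and "\<And>x. \<not> adj x x"
    and "\<And>K. clique V adj K \<Longrightarrow> card K \<le> m"
    and "v \<in> V" and "clique {u\<in>V. adj v u} adj K"
  shows "card K \<le> m - 1"
proof -
  have "clique V adj (insert v K)" and "v \<notin> K" and "finite K"
    using assms(1-3,5,6) by (auto simp: clique_def intro: finite_subset)
  then show ?thesis
    using assms(4) by fastforce
qed

theorem card_cliques_le_balanced_prod:
  assumes "finite V" and "\<And>x y. adj x y \<Longrightarrow> adj y x" and "\<And>x. \<not> adj x x" and "1 \<le> m"
    and "\<And>K. clique V adj K \<Longrightarrow> card K \<le> m"
  shows "card (cliques V adj m) \<le> balanced_prod (card V) m"
  using assms(1,4,5)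
proof (induction "card V" arbitrary: V m rule: less_induct)
  case less
  consider "V = {}" | "m = 1" | "V \<noteq> {}" "2 \<le> m"
    using less.prems(2) by fastforce
  then show ?case
  proof cases
    case 1
    then have "cliques V adj m = {}"
      using less.prems(2) by (auto simp: clique_def)
    then show ?thesis
      by (metis card.empty le0)
  next
    case 2
    then show ?thesis
      using card_cliques_1_le[OF less.prems(1)] by (simp add: balanced_prod_def)
  next
    case 3
    obtain v where "v \<in> V" and many: "card V \<le> m * card {u\<in>V. \<not> adj v u}"
      using exists_vertex_many_non_neighbours[of V adj m] less.prems(1,3) 3(1) assms(2,3)
      by blast
    define N where "N = {u\<in>V. adj v u}"
    define C where "C = {u\<in>V. \<not> adj v u}"
    have card_V: "card V = card N + card C"
      using card_Int_Diff[OF less.prems(1), of "{u. adj v u}"]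
      by (simp add: N_def C_def set_diff_eq Collect_conj_eq Int_commute)
    have "v \<in> C"
      using \<open>v \<in> V\<close> assms(3) by (simp add: C_def)
    then have "card C > 0"
      using less.prems(1) by (auto simp: C_def card_gt_0_iff)
    have "card (cliques (V - {v}) adj m) \<le> balanced_prod (card (V - {v})) m"
    proof (rule less.hyps)
      show "card (V - {v}) < card V"
        using less.prems(1) \<open>v \<in> V\<close> by (rule card_Diff1_less)
      show "finite (V - {v})" "1 \<le> m"
        using less.prems(1,2) by simp_all
      show "card K \<le> m" if "clique (V - {v}) adj K" for K
        using that less.prems(3) by (auto simp: clique_def)
    qed
    moreover have "card (cliques N adj (m - 1)) \<le> balanced_prod (card N) (m - 1)"
    proof (rule less.hyps)
      show "card N < card V"
        using card_V \<open>card C > 0\<close> by simp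
      show "finite N" "1 \<le> m - 1"
        using less.prems(1) 3(2) by (simp_all add: N_def)
      show "card K \<le> m - 1" if "clique N adj K" for K
        using that card_clique_neighbourhood_le[of V adj m] less.prems \<open>v \<in> V\<close> assms(2,3)
        by (simp add: N_def)
    qed
    moreover have "balanced_prod (card V - 1) m + balanced_prod (card N) (m - 1)
        \<le> balanced_prod (card V) m"
      using 3(2) many card_V \<open>card C > 0\<close>
      by (intro balanced_prod_delete_vertex) (simp_all add: C_def)
    ultimately show ?thesis
      using card_cliques_le_split[OF less.prems(1) \<open>v \<in> V\<close>, of adj m] less.prems(1) \<open>v \<in> V\<close>
      by (simp add: N_def)
  qed
qed

section \<open>Majority-closed families\<close>

definition majority :: "'a set \<Rightarrow> 'a set \<Rightarrow> 'a set \<Rightarrow> 'a set" where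
  "majority A B C = (A \<inter> B) \<union> (A \<inter> C) \<union> (B \<inter> C)"

definition majority_closed :: "'a set set \<Rightarrow> bool" where
  "majority_closed \<A> \<longleftrightarrow> (\<forall>A\<in>\<A>. \<forall>B\<in>\<A>. \<forall>C\<in>\<A>. majority A B C \<in> \<A>)"

text \<open>Of three literals satisfied in a clause of width at most two, two coincide.\<close>
lemma clause_sat_majority:
  assumes "finite Cl" and "card Cl \<le> 2"
    and "clause_sat A Cl" and "clause_sat B Cl" and "clause_sat C Cl"
  shows "clause_sat (majority A B C) Cl"
proof -
  obtain a b c where abc: "a \<in> Cl" "lit_sat A a" "b \<in> Cl" "lit_sat B b" "c \<in> Cl" "lit_sat C c"
    using assms(3-5) by (auto simp: clause_sat_def)
  have "a = b \<or> a = c \<or> b = c"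
  proof (rule ccontr)
    assume "\<not> ?thesis"
    then have "card {a, b, c} = 3"
      by auto
    moreover have "card {a, b, c} \<le> card Cl"
      using abc assms(1) by (intro card_mono) auto
    ultimately show False
      using assms(2) by simp
  qed
  then show ?thesis
    using abc by (auto simp: clause_sat_def lit_sat_def majority_def split: if_splits)
qed

lemma majority_closed_solutions:
  assumes "\<And>Cl. Cl \<in> F \<Longrightarrow> finite Cl \<and> card Cl \<le> 2"
  shows "majority_closed {A. A \<subseteq> X \<and> cnf_sat A F}"
  using assms clause_sat_majority
  by (auto simp: majority_closed_def cnf_sat_def majority_def)

lemma majority_closed_helly:
  assumes "majority_closed \<A>" and "finite I" and "I \<noteq> {}"
    and "\<And>i j. i \<in> I \<Longrightarrow> j \<in> I \<Longrightarrow> \<exists>A\<in>\<A>. i \<notin> A \<and> j \<notin> A"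
  shows "\<exists>A\<in>\<A>. A \<inter> I = {}"
  using assms(2-4)
proof (induction I rule: finite_psubset_induct)
  case (psubset I)
  show ?case
  proof (cases "card I \<le> 2")
    case True
    moreover have "card I \<noteq> 0"
      using psubset.hyps psubset.prems(1) by simp
    ultimately have "card I = 1 \<or> card I = 2"
      by linarith
    then obtain i j where "I = {i, j}"
      by (auto simp: card_1_singleton_iff card_2_iff)
    then show ?thesis
      using psubset.prems(2)[of i j] by auto
  next
    case False
    then obtain T where "T \<subseteq> I" "card T = 3"
      using obtain_subset_with_card_n[of 3 I] by auto
    then obtain a b c where abc: "{a, b, c} \<subseteq> I" "a \<noteq> b" "a \<noteq> c" "b \<noteq> c"
      by (auto simp: card_3_iff)
    have avoid: "\<exists>A\<in>\<A>. A \<inter> (I - {x}) = {}" if "x \<in> I" "y \<in> I" "x \<noteq> y" for x y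
      using that psubset.prems(2) by (intro psubset.IH) auto
    obtain A where "A \<in> \<A>" "A \<inter> (I - {a}) = {}"
      using avoid[of a b] abc by auto
    moreover obtain B where "B \<in> \<A>" "B \<inter> (I - {b}) = {}"
      using avoid[of b a] abc by auto
    moreover obtain C where "C \<in> \<A>" "C \<inter> (I - {c}) = {}"
      using avoid[of c a] abc by auto
    ultimately show ?thesis
      using assms(1) abc by (intro bexI[of _ "majority A B C"]) (auto simp: majority_closed_def majority_def)
  qed
qed

section \<open>The upper bound\<close>

definition avoided_together :: "'a set set \<Rightarrow> 'a \<Rightarrow> 'a \<Rightarrow> bool" where
  "avoided_together \<A> i j \<longleftrightarrow> i \<noteq> j \<and> (\<exists>A\<in>\<A>. i \<notin> A \<and> j \<notin> A)"

lemma clique_avoided_together_avoided: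
  assumes "majority_closed \<A>" and "clique V (avoided_together \<A>) K"
    and "finite K" and "2 \<le> card K"
  shows "\<exists>A\<in>\<A>. A \<inter> K = {}"
proof (rule majority_closed_helly[OF assms(1,3)])
  show "K \<noteq> {}"
    using assms(4) by auto
  fix i j
  assume "i \<in> K" "j \<in> K"
  have "\<not> K \<subseteq> {i}"
    using assms(4) card_mono[of "{i}" K] by auto
  then obtain k where "k \<in> K" "k \<noteq> i"
    by blast
  then have "avoided_together \<A> i (if i = j then k else j)"
    using assms(2) \<open>i \<in> K\<close> \<open>j \<in> K\<close> by (auto simp: clique_def)
  then show "\<exists>A\<in>\<A>. i \<notin> A \<and> j \<notin> A"
    by (auto simp: avoided_together_def split: if_splits)
qed

theorem card_sat_t_le_balanced_prod:
  assumes "t < n" and "is_kcnf n 2 F" and "admissible n t F"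
  shows "card (sat_t n t F) \<le> balanced_prod n (n - t)"
proof -
  define \<A> where "\<A> = {A. A \<subseteq> {0..<n} \<and> cnf_sat A F}"
  let ?adj = "avoided_together \<A>"
  have "majority_closed \<A>"
    unfolding \<A>_def using assms(2) by (intro majority_closed_solutions) (auto simp: is_kcnf_def)
  have clique_bound: "card K \<le> n - t" if K: "clique {0..<n} ?adj K" for K
  proof (cases "card K \<le> 1")
    case False
    then have "finite K"
      using card.infinite by fastforce
    then obtain A where "A \<in> \<A>" "A \<inter> K = {}"
      using clique_avoided_together_avoided[OF \<open>majority_closed \<A>\<close> K] False by auto
    then have "card A \<le> card ({0..<n} - K)"
      by (intro card_mono) (auto simp: \<A>_def)
    moreover have "\<not> card A < t"
      using assms(3) \<open>A \<in> \<A>\<close> by (auto simp: admissible_def \<A>_def)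
    moreover have "K \<subseteq> {0..<n}"
      using K by (simp add: clique_def)
    ultimately show ?thesis
      using \<open>finite K\<close> card_mono[of "{0..<n}" K] by (simp add: card_Diff_subset)
  qed (use assms(1) in simp)
  have "card (sat_t n t F) \<le> card (cliques {0..<n} ?adj (n - t))"
  proof (rule card_inj_on_le)
    show "inj_on (\<lambda>A. {0..<n} - A) (sat_t n t F)"
      by (rule inj_onI) (auto simp: sat_t_def)
    show "(\<lambda>A. {0..<n} - A) ` sat_t n t F \<subseteq> cliques {0..<n} ?adj (n - t)"
      by (auto simp: sat_t_def clique_def avoided_together_def \<A>_def card_Diff_subset finite_subset)
    show "finite (cliques {0..<n} ?adj (n - t))"
      by (simp add: finite_cliques)
  qed
  also have "\<dots> \<le> balanced_prod (card {0..<n}) (n - t)"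
    by (rule card_cliques_le_balanced_prod)
      (use clique_bound assms(1) in \<open>auto simp: avoided_together_def\<close>)
  finally show ?thesis
    by simp
qed

section \<open>The extremal formulas\<close>

definition residue_cnf :: "nat \<Rightarrow> nat \<Rightarrow> cnf" where
  "residue_cnf n m =
    {{(i, True), (j, True)} | i j. i < n \<and> j < n \<and> i \<noteq> j \<and> i mod m = j mod m}"

lemma is_kcnf_residue_cnf: "is_kcnf n 2 (residue_cnf n m)"
  by (auto simp: is_kcnf_def residue_cnf_def card_insert_if)

lemma admissible_residue_cnf:
  assumes "0 < m"
  shows "admissible n (n - m) (residue_cnf n m)"
  unfolding admissible_def
proof (intro allI impI notI)
  fix A
  assume A: "A \<subseteq> {0..<n} \<and> card A < n - m" and sat: "cnf_sat A (residue_cnf n m)"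
  define B where "B = {0..<n} - A"
  have "card B = n - card A"
    using A finite_subset[of A "{0..<n}"] by (simp add: B_def card_Diff_subset)
  then have "card {..<m} < card B"
    using A by simp linarith
  moreover have "(\<lambda>i. i mod m) ` B \<subseteq> {..<m}"
    using assms by auto
  ultimately have "\<not> inj_on (\<lambda>i. i mod m) B"
    using card_inj_on_le[of "\<lambda>i. i mod m" B "{..<m}"] by (auto simp: B_def)
  then obtain i j where "i \<in> B" "j \<in> B" "i \<noteq> j" "i mod m = j mod m"
    by (auto simp: inj_on_def)
  then have "{(i, True), (j, True)} \<in> residue_cnf n m"
    by (auto simp: residue_cnf_def B_def)
  then show False
    using sat \<open>i \<in> B\<close> \<open>j \<in> B\<close> by (auto simp: cnf_sat_def clause_sat_def lit_sat_def B_def)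
qed

lemma mult_add_less_iff:
  fixes j k m n :: nat
  assumes "k < m"
  shows "j * m + k < n \<longleftrightarrow> j < n div m + (if k < n mod m then 1 else 0)"
proof -
  have n: "n div m * m + n mod m = n"
    by (rule div_mult_mod_eq)
  consider "j < n div m" | "j = n div m" | "n div m < j"
    by linarith
  then show ?thesis
  proof cases
    case 1
    then have "j * m + m \<le> n div m * m"
      using mult_le_mono1[of "Suc j" "n div m" m] by simp
    then have "j * m + k < n"
      using assms n by linarith
    then show ?thesis
      using 1 by simp
  next
    case 2
    have "n div m * m + k < n \<longleftrightarrow> k < n mod m"
      using n by linarith
    then show ?thesis
      using 2 by simp
  next
    case 3
    then have "n div m * m + m \<le> j * m"
      using mult_le_mono1[of "Suc (n div m)" j m] by simp
    moreover have "n mod m < m"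
      using assms by simp
    ultimately have "\<not> j * m + k < n"
      using n by linarith
    then show ?thesis
      using 3 by simp
  qed
qed

lemma card_residue_class:
  assumes "k < m"
  shows "card {i. i < n \<and> i mod m = k} = n div m + (if k < n mod m then 1 else 0)"
    (is "card ?R = ?c")
proof -
  note bound = mult_add_less_iff[OF assms, of _ n]
  have "?R = (\<lambda>j. j * m + k) ` {..<?c}"
  proof (intro set_eqI iffI)
    fix i
    assume "i \<in> ?R"
    then have "i div m * m + k = i" and "i < n"
      using div_mult_mod_eq[of i m] by simp_all
    then show "i \<in> (\<lambda>j. j * m + k) ` {..<?c}"
      using bound[of "i div m"] by (intro image_eqI[of _ _ "i div m"]) auto
  next
    fix i
    assume "i \<in> (\<lambda>j. j * m + k) ` {..<?c}"
    then obtain j where "j < ?c" and "i = j * m + k"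
      by blast
    then show "i \<in> ?R"
      using bound[of j] assms by simp
  qed
  moreover have "inj_on (\<lambda>j. j * m + k) {..<?c}"
    using assms by (intro inj_onI) simp
  ultimately show ?thesis
    by (simp add: card_image)
qed

text \<open>A transversal picks the one false variable of each residue class in a weight-\<open>(n - m)\<close>
  solution of \<open>residue_cnf n m\<close>.\<close>
definition residue_transversals :: "nat \<Rightarrow> nat \<Rightarrow> (nat \<Rightarrow> nat) set" where
  "residue_transversals n m = (\<Pi>\<^sub>E k\<in>{..<m}. {i. i < n \<and> i mod m = k})"

lemma residue_transversalsD:
  "f \<in> residue_transversals n m \<Longrightarrow> k < m \<Longrightarrow> f k < n \<and> f k mod m = k"
  by (auto simp: residue_transversals_def)

lemma card_residue_transversals:
  assumes "0 < m"
  shows "card (residue_transversals n m) = balanced_prod n m"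
proof -
  have "n mod m < m"
    using assms by simp
  have "card (residue_transversals n m) = (\<Prod>k<m. card {i. i < n \<and> i mod m = k})"
    by (simp add: residue_transversals_def card_PiE)
  also have "\<dots> = (\<Prod>k\<in>{..<m} \<inter> {k. k < n mod m}. n div m + 1)
      * (\<Prod>k\<in>{..<m} \<inter> - {k. k < n mod m}. n div m)"
    using \<open>n mod m < m\<close>
    by (subst prod.If_cases[symmetric]) (auto intro!: prod.cong simp: card_residue_class)
  also have "{..<m} \<inter> {k. k < n mod m} = {..<n mod m}"
    using \<open>n mod m < m\<close> by auto
  also have "{..<m} \<inter> - {k. k < n mod m} = {n mod m..<m}"
    by auto
  finally show ?thesis
    by (simp add: balanced_prod_def mult.commute)
qed

lemma inj_on_residue_transversals_complement:
  "inj_on (\<lambda>f. {0..<n} - f ` {..<m}) (residue_transversals n m)"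
proof (rule inj_onI)
  fix f g
  assume f: "f \<in> residue_transversals n m" and g: "g \<in> residue_transversals n m"
    and "{0..<n} - f ` {..<m} = {0..<n} - g ` {..<m}"
  then have same: "f ` {..<m} = g ` {..<m}"
    using residue_transversalsD by auto
  have "f k = g k" if "k < m" for k
  proof -
    have "f k \<in> g ` {..<m}"
      using same \<open>k < m\<close> by blast
    then obtain k' where "k' < m" "f k = g k'"
      by auto
    then show ?thesis
      using residue_transversalsD[OF f] residue_transversalsD[OF g] \<open>k < m\<close> by metis
  qed
  then show "f = g"
    using f g by (intro PiE_ext[of f "{..<m}"]) (auto simp: residue_transversals_def)
qed

lemma residue_transversal_complement_in_sat_t:
  assumes "m \<le> n" and f: "f \<in> residue_transversals n m"
  shows "{0..<n} - f ` {..<m} \<in> sat_t n (n - m) (residue_cnf n m)"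
proof -
  note fD = residue_transversalsD[OF f]
  have "inj_on f {..<m}"
    using fD by (metis inj_onI lessThan_iff)
  then have "card (f ` {..<m}) = m"
    by (simp add: card_image)
  moreover have "f ` {..<m} \<subseteq> {0..<n}"
    using fD by auto
  ultimately have "card ({0..<n} - f ` {..<m}) = n - m"
    by (simp add: card_Diff_subset finite_subset)
  moreover have "cnf_sat ({0..<n} - f ` {..<m}) (residue_cnf n m)"
    using fD by (fastforce simp: cnf_sat_def residue_cnf_def clause_sat_def lit_sat_def)
  ultimately show ?thesis
    by (auto simp: sat_t_def)
qed

lemma balanced_prod_le_card_sat_t_residue_cnf:
  assumes "0 < m" and "m \<le> n"
  shows "balanced_prod n m \<le> card (sat_t n (n - m) (residue_cnf n m))"
proof -
  have "finite (sat_t n (n - m) (residue_cnf n m))"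
    by (rule finite_subset[of _ "Pow {0..<n}"]) (auto simp: sat_t_def)
  then have "card (residue_transversals n m) \<le> card (sat_t n (n - m) (residue_cnf n m))"
    using inj_on_residue_transversals_complement residue_transversal_complement_in_sat_t[OF assms(2)]
    by (intro card_inj_on_le) auto
  then show ?thesis
    using card_residue_transversals[OF assms(1)] by simp
qed

theorem theorem3:
  fixes n t :: nat
  assumes "1 \<le> n" and "t < n"
  shows "S n t 2 = (let q = n div (n - t); r = n mod (n - t)
                    in q ^ (n - t - r) * (q + 1) ^ r)"
proof -
  let ?counts = "{card (sat_t n t F) | F. is_kcnf n 2 F \<and> admissible n t F}"
  have upper: "c \<le> balanced_prod n (n - t)" if "c \<in> ?counts" for c
    using that card_sat_t_le_balanced_prod[OF assms(2)] by blast
  define F where "F = residue_cnf n (n - t)"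
  have "is_kcnf n 2 F" and "admissible n t F"
    using is_kcnf_residue_cnf admissible_residue_cnf[of "n - t" n] assms(2) by (simp_all add: F_def)
  moreover have "balanced_prod n (n - t) \<le> card (sat_t n t F)"
    using balanced_prod_le_card_sat_t_residue_cnf[of "n - t" n] assms(2) by (simp add: F_def)
  ultimately have "balanced_prod n (n - t) \<in> ?counts"
    using upper le_antisym by blast
  moreover have "finite ?counts"
    using upper by (meson finite_nat_set_iff_bounded_le)
  ultimately have "Max ?counts = balanced_prod n (n - t)"
    using upper by (intro Max_eqI)
  then show ?thesis
    by (simp add: S_def balanced_prod_def Let_def)
qed

end
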